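(* Let $\mathcal E$ be an exchangeability system for a noncommutative probability space $(\mathcal A,\phi)$, let $n\ge 1$ and $X_1,\dots,X_n\in\mathcal A$. Suppose there is a subset $I\subseteq[n]$ with $I\neq\emptyset$ and $I\neq[n]$ such that the families $(X_j)_{j\in I}$ and $(X_j)_{j\in[n]\setminus I}$ are $\mathcal E$-independent. Then $K_n(X_1,\dots,X_n)=0$.
   Context: A noncommutative probability space is a pair $(\mathcal A,\phi)$ of a complex unital algebra $\mathcal A$ and a unital linear functional $\phi$. An exchangeability system $\mathcal E$ for $(\mathcal A,\phi)$ consists of a noncommutative probability space $(\mathcal U,\tilde\phi)$ and a family $(\iota_k)_{k\in\mathbb N}$ of embeddings (injective unital algebra homomorphisms) $\iota_k:\mathcal A\to\mathcal A_k\subseteq\mathcal U$ with $\tilde\phi\circ\iota_k=\phi$; write $X^{(k)}=\iota_k(X)$. It is required that for all $X_1,\dots,X_n\in\mathcal A$, all indices $i_1,\dots,i_n\in\mathbb N$ and every bijection $\sigma$ of $\mathbb N$, $\tilde\phi(X_1^{(i_1)}\cdots X_n^{(i_n)})=\tilde\phi(X_1^{(\sigma(i_1))}\cdots X_n^{(\sigma(i_n))})$. Thus this value depends only on the kernel of $h:j\mapsto i_j$ (the partition of $[n]=\{1,\dots,n\}$ into the level sets of $h$); for a partition $\pi$ of $[n]$ this value is denoted $\phi_\pi(X_1,\dots,X_n)$. For a primitive $n$-th root of unity $\omega$ put $X_j^\omega=\sum_{k=1}^n\omega^kX_j^{(k)}$ and define the cumulant $K_n(X_1,\dots,X_n)=\frac1n\tilde\phi(X_1^\omega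 X_2^\omega\cdots X_n^\omega)$. Subalgebras $\mathcal B,\mathcal C\subseteq\mathcal A$ are $\mathcal E$-independent if for all $X_1,\dots,X_n\in\mathcal B\cup\mathcal C$ and every decomposition $[n]=I\sqcup J$ with $X_i\in\mathcal B$ for $i\in I$ and $X_i\in\mathcal C$ for $i\in J$, one has $\phi_\pi(X_1,\dots,X_n)=\phi_{\pi'}(X_1,\dots,X_n)$ whenever the partitions $\pi,\pi'$ of $[n]$ satisfy $\pi|_I=\pi'|_I$ and $\pi|_J=\pi'|_J$. Two families of elements of $\mathcal A$ are $\mathcal E$-independent if the subalgebras they generate are. *)

theory Defs
  imports Complex_Main "HOL-Library.Disjoint_Sets"
begin

definition complex_unital_algebra :: "(complex \<Rightarrow> 'a::ring_1 \<Rightarrow> 'a) \<Rightarrow> bool" where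
  "complex_unital_algebra sc \<longleftrightarrow>
     (\<forall>c x y. sc c (x + y) = sc c x + sc c y) \<and>
     (\<forall>c d x. sc (c + d) x = sc c x + sc d x) \<and>
     (\<forall>c d x. sc (c * d) x = sc c (sc d x)) \<and>
     (\<forall>x. sc 1 x = x) \<and>
     (\<forall>c x y. sc c (x * y) = sc c x * y) \<and>
     (\<forall>c x y. sc c (x * y) = x * sc c y)"

definition ncps :: "(complex \<Rightarrow> 'a::ring_1 \<Rightarrow> 'a) \<Rightarrow> ('a \<Rightarrow> complex) \<Rightarrow> bool" where
  "ncps sc phi \<longleftrightarrow> complex_unital_algebra sc \<and>
     (\<forall>x y. phi (x + y) = phi x + phi y) \<and>
     (\<forall>c x. phi (sc c x) = c * phi x) \<and>
     phi 1 = 1"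

definition alg_embedding :: "(complex \<Rightarrow> 'a::ring_1 \<Rightarrow> 'a) \<Rightarrow> (complex \<Rightarrow> 'u::ring_1 \<Rightarrow> 'u)
    \<Rightarrow> ('a \<Rightarrow> 'u) \<Rightarrow> bool" where
  "alg_embedding sA sU f \<longleftrightarrow> inj f \<and> f 1 = 1 \<and>
     (\<forall>x y. f (x + y) = f x + f y) \<and>
     (\<forall>x y. f (x * y) = f x * f y) \<and>
     (\<forall>c x. f (sA c x) = sU c (f x))"

definition oprod :: "nat \<Rightarrow> (nat \<Rightarrow> 'a::monoid_mult) \<Rightarrow> 'a" where
  "oprod n f = prod_list (map f [0..<n])"

text \<open>Exchangeability system (U, phit, iota) for (A, phi). Positions 1..n of the
 paper are 0..n-1 here; copies are indexed by all of nat.\<close>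
definition exch_system :: "(complex \<Rightarrow> 'a::ring_1 \<Rightarrow> 'a) \<Rightarrow> ('a \<Rightarrow> complex)
    \<Rightarrow> (complex \<Rightarrow> 'u::ring_1 \<Rightarrow> 'u) \<Rightarrow> ('u \<Rightarrow> complex) \<Rightarrow> (nat \<Rightarrow> 'a \<Rightarrow> 'u) \<Rightarrow> bool" where
  "exch_system sA phi sU phit iota \<longleftrightarrow>
     ncps sA phi \<and> ncps sU phit \<and>
     (\<forall>k. alg_embedding sA sU (iota k) \<and> (\<forall>x. phit (iota k x) = phi x)) \<and>
     (\<forall>n X i \<sigma>. bij (\<sigma> :: nat \<Rightarrow> nat) \<longrightarrow>
        phit (oprod n (\<lambda>j. iota (i j) (X j))) = phit (oprod n (\<lambda>j. iota (\<sigma> (i j)) (X j))))"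

definition kernel_part :: "nat \<Rightarrow> (nat \<Rightarrow> nat) \<Rightarrow> nat set set" where
  "kernel_part n h = (\<lambda>i. {j. j < n \<and> h j = h i}) ` {..<n}"

text \<open>phi_pi (X_1,...,X_n): the common value for any index map with kernel pi.\<close>
definition phi_part :: "('u::ring_1 \<Rightarrow> complex) \<Rightarrow> (nat \<Rightarrow> 'a \<Rightarrow> 'u) \<Rightarrow> nat
    \<Rightarrow> nat set set \<Rightarrow> (nat \<Rightarrow> 'a) \<Rightarrow> complex" where
  "phi_part phit iota n \<pi> X =
     phit (oprod n (\<lambda>j. iota ((SOME h. kernel_part n h = \<pi>) j) (X j)))"

definition restrict_part :: "'b set set \<Rightarrow> 'b set \<Rightarrow> 'b set set" where
  "restrict_part \<pi> I = (\<lambda>B. B \<inter> I) ` \<pi> - {{}}"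

inductive_set gen_alg :: "(complex \<Rightarrow> 'a::ring_1 \<Rightarrow> 'a) \<Rightarrow> 'a set \<Rightarrow> 'a set"
  for sc S where
  base: "x \<in> S \<Longrightarrow> x \<in> gen_alg sc S"
| one: "1 \<in> gen_alg sc S"
| add: "x \<in> gen_alg sc S \<Longrightarrow> y \<in> gen_alg sc S \<Longrightarrow> x + y \<in> gen_alg sc S"
| mult: "x \<in> gen_alg sc S \<Longrightarrow> y \<in> gen_alg sc S \<Longrightarrow> x * y \<in> gen_alg sc S"
| scal: "x \<in> gen_alg sc S \<Longrightarrow> sc c x \<in> gen_alg sc S"

definition E_indep :: "('u::ring_1 \<Rightarrow> complex) \<Rightarrow> (nat \<Rightarrow> 'a \<Rightarrow> 'u) \<Rightarrow> 'a set \<Rightarrow> 'a set \<Rightarrow> bool" where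
  "E_indep phit iota B C \<longleftrightarrow>
     (\<forall>n X I J \<pi> \<pi>'. I \<union> J = {..<n} \<and> I \<inter> J = {} \<and>
        (\<forall>i\<in>I. X i \<in> B) \<and> (\<forall>j\<in>J. X j \<in> C) \<and>
        partition_on {..<n} \<pi> \<and> partition_on {..<n} \<pi>' \<and>
        restrict_part \<pi> I = restrict_part \<pi>' I \<and> restrict_part \<pi> J = restrict_part \<pi>' J
        \<longrightarrow> phi_part phit iota n \<pi> X = phi_part phit iota n \<pi>' X)"

definition prim_root :: "nat \<Rightarrow> complex \<Rightarrow> bool" where
  "prim_root n \<omega> \<longleftrightarrow> \<omega> ^ n = 1 \<and> (\<forall>k. 0 < k \<and> k < n \<longrightarrow> \<omega> ^ k \<noteq> 1)"

definition cumulant :: "(complex \<Rightarrow> 'u::ring_1 \<Rightarrow> 'u) \<Rightarrow> ('u \<Rightarrow> complex) \<Rightarrow> (nat \<Rightarrow> 'a \<Rightarrow> 'u)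
    \<Rightarrow> complex \<Rightarrow> nat \<Rightarrow> (nat \<Rightarrow> 'a) \<Rightarrow> complex" where
  "cumulant sU phit iota \<omega> n X =
     phit (oprod n (\<lambda>j. \<Sum>k=1..n. sU (\<omega> ^ k) (iota k (X j)))) / of_nat n"

end

theory Submission
  imports Defs "HOL-Library.FuncSet"
begin

text \<open>Expanding the product in the definition of \<open>K\<^sub>n\<close> writes \<open>n K\<^sub>n\<close> as a sum, over
  index maps \<open>h : [n] \<rightarrow> [n]\<close>, of \<open>\<omega>\<^bsup>h(1)+\<dots>+h(n)\<^esup>\<close> times the mixed moment
  \<open>\<phi>(X\<^sub>1\<^bsup>(h(1))\<^esup> \<cdots> X\<^sub>n\<^bsup>(h(n))\<^esup>)\<close>. Shifting the indices cyclically at the positions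
  in \<open>I\<close> permutes the index maps and multiplies every weight by \<open>\<omega>\<^bsup>|I|\<^esup>\<close>. It keeps the
  kernels of \<open>h\<close> restricted to \<open>I\<close> and to its complement, so by \<open>\<E>\<close>-independence it
  keeps every moment. Hence the sum equals \<open>\<omega>\<^bsup>|I|\<^esup>\<close> times itself, and
  \<open>\<omega>\<^bsup>|I|\<^esup> \<noteq> 1\<close> because \<open>0 < |I| < n\<close>.\<close>

lemma complex_unital_algebra_scale_mult:
  assumes "complex_unital_algebra sc"
  shows "sc c x * sc d y = sc (c * d) (x * y)"
  using assms unfolding complex_unital_algebra_def by metis

lemma ncps_sum:
  assumes "ncps sc phi"
  shows "phi (sum f A) = (\<Sum>x\<in>A. phi (f x))"
proof -
  have add: "phi (x + y) = phi x + phi y" for x y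
    using assms unfolding ncps_def by blast
  then have "phi 0 = 0"
    by (metis add_cancel_right_right add_0)
  with add show ?thesis
    by (induction A rule: infinite_finite_induct) simp_all
qed

lemma ncps_scale:
  assumes "ncps sc phi"
  shows "phi (sc c x) = c * phi x"
  using assms unfolding ncps_def by blast

lemma oprod_Suc: "oprod (Suc m) f = oprod m f * f m"
  by (simp add: oprod_def)

lemma oprod_cong: "m = m' \<Longrightarrow> (\<And>j. j < m' \<Longrightarrow> f j = g j) \<Longrightarrow> oprod m f = oprod m' g"
  unfolding oprod_def by (intro arg_cong[where f = prod_list] map_cong) auto

lemma oprod_sum_distrib:
  fixes F :: "nat \<Rightarrow> 'b \<Rightarrow> 'a::semiring_1"
  shows "oprod m (\<lambda>j. \<Sum>k\<in>K. F j k) = (\<Sum>h\<in>{..<m} \<rightarrow>\<^sub>E K. oprod m (\<lambda>j. F j (h j)))"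
proof (induction m)
  case 0
  then show ?case by (simp add: oprod_def)
next
  case (Suc m)
  have "oprod (Suc m) (\<lambda>j. \<Sum>k\<in>K. F j k) =
      (\<Sum>(h, k)\<in>({..<m} \<rightarrow>\<^sub>E K) \<times> K. oprod m (\<lambda>j. F j (h j)) * F m k)"
    by (simp add: oprod_Suc Suc sum_product sum.cartesian_product)
  also have "\<dots> = (\<Sum>h\<in>{..<Suc m} \<rightarrow>\<^sub>E K. oprod (Suc m) (\<lambda>j. F j (h j)))"
    by (rule sum.reindex_bij_witness[of _ "\<lambda>h. (h(m := undefined), h m)" "\<lambda>(h, k). h(m := k)"])
      (auto simp: oprod_Suc PiE_def extensional_def less_Suc_eq cong: oprod_cong)
  finally show ?case .
qed

lemma oprod_scale:
  assumes "complex_unital_algebra sc"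
  shows "oprod m (\<lambda>j. sc (c j) (x j)) = sc (\<Prod>j<m. c j) (oprod m x)"
proof (induction m)
  case 0
  then show ?case
    using assms by (simp add: oprod_def complex_unital_algebra_def)
next
  case (Suc m)
  then show ?case
    by (simp add: oprod_Suc complex_unital_algebra_scale_mult[OF assms])
qed

lemma cumulant_eq_moment_sum:
  assumes "ncps sU phit"
  shows "cumulant sU phit iota \<omega> n X =
    (\<Sum>h\<in>{..<n} \<rightarrow>\<^sub>E {1..n}. (\<Prod>j<n. \<omega> ^ h j) * phit (oprod n (\<lambda>j. iota (h j) (X j))))
      / of_nat n"
proof -
  have "complex_unital_algebra sU"
    using assms unfolding ncps_def by blast
  then have "oprod n (\<lambda>j. \<Sum>k=1..n. sU (\<omega> ^ k) (iota k (X j))) =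
      (\<Sum>h\<in>{..<n} \<rightarrow>\<^sub>E {1..n}. sU (\<Prod>j<n. \<omega> ^ h j) (oprod n (\<lambda>j. iota (h j) (X j))))"
    by (simp add: oprod_sum_distrib) (intro sum.cong refl oprod_scale)
  then show ?thesis
    unfolding cumulant_def by (simp add: ncps_sum[OF assms] ncps_scale[OF assms])
qed

lemma bij_betw_extend_to_bij:
  fixes f :: "'a \<Rightarrow> 'a"
  assumes "bij_betw f A B" "finite A" "finite B"
  obtains \<sigma> where "bij \<sigma>" "\<And>x. x \<in> A \<Longrightarrow> \<sigma> x = f x"
proof -
  have "card A = card B"
    using assms(1) by (rule bij_betw_same_card)
  then have "card (B - A) = card (A - B)"
    using assms(2,3) by (simp add: card_Diff_subset_Int Int_commute)
  then obtain e where e: "bij_betw e (B - A) (A - B)"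
    using assms(2,3) finite_same_card_bij[of "B - A" "A - B"] by auto
  define \<sigma> where "\<sigma> x = (if x \<in> A then f x else if x \<in> B then e x else x)" for x
  have "bij_betw \<sigma> A B"
    using assms(1) by (rule bij_betw_cong[THEN iffD1, rotated]) (simp add: \<sigma>_def)
  moreover have "bij_betw \<sigma> (B - A) (A - B)"
    using e by (rule bij_betw_cong[THEN iffD1, rotated]) (simp add: \<sigma>_def)
  moreover have "bij_betw \<sigma> (- (A \<union> B)) (- (A \<union> B))"
    using bij_betw_id by (rule bij_betw_cong[THEN iffD1, rotated]) (simp add: \<sigma>_def)
  ultimately have "bij_betw \<sigma> (A \<union> (B - A) \<union> - (A \<union> B)) (B \<union> (A - B) \<union> - (A \<union> B))"
    by (intro bij_betw_combine) auto
  moreover have "A \<union> (B - A) \<union> - (A \<union> B) = UNIV" "B \<union> (A - B) \<union> - (A \<union> B) = UNIV"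
    by auto
  ultimately show thesis
    using that by (simp add: \<sigma>_def)
qed

lemma kernel_part_eq_iff:
  "kernel_part n h = kernel_part n g \<longleftrightarrow> (\<forall>i<n. \<forall>j<n. h i = h j \<longleftrightarrow> g i = g j)"
proof
  assume ker: "kernel_part n h = kernel_part n g"
  show "\<forall>i<n. \<forall>j<n. h i = h j \<longleftrightarrow> g i = g j"
  proof (intro allI impI)
    fix i j assume "i < n" "j < n"
    then have "{l. l < n \<and> h l = h i} \<in> kernel_part n h"
      unfolding kernel_part_def by blast
    then have "{l. l < n \<and> h l = h i} \<in> kernel_part n g"
      by (simp only: ker)
    then obtain k where "{l. l < n \<and> h l = h i} = {l. l < n \<and> g l = g k}"
      unfolding kernel_part_def by blast
    then have "h l = h i \<longleftrightarrow> g l = g k" if "l < n" for l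
      using that by blast
    then show "h i = h j \<longleftrightarrow> g i = g j"
      using \<open>i < n\<close> \<open>j < n\<close> by metis
  qed
next
  assume "\<forall>i<n. \<forall>j<n. h i = h j \<longleftrightarrow> g i = g j"
  then show "kernel_part n h = kernel_part n g"
    unfolding kernel_part_def by (intro image_cong refl Collect_cong) auto
qed

lemma partition_on_kernel_part: "partition_on {..<n} (kernel_part n h)"
  unfolding partition_on_def disjoint_def kernel_part_def by auto

lemma restrict_part_kernel_part:
  assumes "I \<subseteq> {..<n}"
  shows "restrict_part (kernel_part n h) I = (\<lambda>i. {j\<in>I. h j = h i}) ` I"
proof (intro equalityI subsetI)
  fix B assume "B \<in> restrict_part (kernel_part n h) I"
  then obtain i where B: "B = {j. j < n \<and> h j = h i} \<inter> I" "B \<noteq> {}"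
    unfolding restrict_part_def kernel_part_def by blast
  then obtain i' where "i' \<in> I" "h i' = h i"
    by blast
  moreover have "B = {j\<in>I. h j = h i}"
    using B(1) assms by blast
  ultimately show "B \<in> (\<lambda>i. {j\<in>I. h j = h i}) ` I"
    by (intro image_eqI[of _ _ i']) auto
next
  fix B assume "B \<in> (\<lambda>i. {j\<in>I. h j = h i}) ` I"
  then obtain i where i: "i \<in> I" "B = {j\<in>I. h j = h i}"
    by blast
  then have "B = {j. j < n \<and> h j = h i} \<inter> I" "B \<noteq> {}" "i < n"
    using assms by blast+
  then show "B \<in> restrict_part (kernel_part n h) I"
    unfolding restrict_part_def kernel_part_def by blast
qed

lemma restrict_part_kernel_part_cong:
  assumes "I \<subseteq> {..<n}" "\<forall>i\<in>I. \<forall>j\<in>I. h i = h j \<longleftrightarrow> g i = g j"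
  shows "restrict_part (kernel_part n h) I = restrict_part (kernel_part n g) I"
  unfolding restrict_part_kernel_part[OF assms(1)]
proof (intro image_cong refl Collect_cong)
  fix i j assume "i \<in> I"
  then show "(j \<in> I \<and> h j = h i) \<longleftrightarrow> (j \<in> I \<and> g j = g i)"
    using assms(2) by blast
qed

lemma exch_system_phit_oprod_cong:
  assumes exch: "exch_system sA phi sU phit iota"
    and same_fibres: "\<forall>i<n. \<forall>j<n. h i = h j \<longleftrightarrow> g i = g j"
  shows "phit (oprod n (\<lambda>j. iota (h j) (X j))) = phit (oprod n (\<lambda>j. iota (g j) (X j)))"
proof -
  define f where "f x = g (SOME j. j < n \<and> h j = x)" for x
  have f_h: "f (h j) = g j" if "j < n" for j
  proof -
    have "(SOME l. l < n \<and> h l = h j) < n \<and> h (SOME l. l < n \<and> h l = h j) = h j"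
      using that by (intro someI) blast
    then show ?thesis
      unfolding f_def using same_fibres that by blast
  qed
  have "bij_betw f (h ` {..<n}) (g ` {..<n})"
  proof (rule bij_betw_imageI)
    show "inj_on f (h ` {..<n})"
      using same_fibres f_h by (auto intro!: inj_onI)
    show "f ` h ` {..<n} = g ` {..<n}"
      using f_h by (force simp: image_image)
  qed
  then obtain \<sigma> where "bij \<sigma>" and \<sigma>_f: "\<And>x. x \<in> h ` {..<n} \<Longrightarrow> \<sigma> x = f x"
    by (rule bij_betw_extend_to_bij) auto
  then have \<sigma>_h: "\<sigma> (h j) = g j" if "j < n" for j
    using f_h that by simp
  have "phit (oprod n (\<lambda>j. iota (h j) (X j))) = phit (oprod n (\<lambda>j. iota (\<sigma> (h j)) (X j)))"
    using exch \<open>bij \<sigma>\<close> unfolding exch_system_def by blast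
  also have "oprod n (\<lambda>j. iota (\<sigma> (h j)) (X j)) = oprod n (\<lambda>j. iota (g j) (X j))"
    by (rule oprod_cong) (simp_all add: \<sigma>_h)
  finally show ?thesis .
qed

lemma phit_oprod_eq_phi_part:
  assumes "exch_system sA phi sU phit iota"
  shows "phit (oprod n (\<lambda>j. iota (h j) (X j))) = phi_part phit iota n (kernel_part n h) X"
proof -
  define g where "g = (SOME g. kernel_part n g = kernel_part n h)"
  have "kernel_part n g = kernel_part n h"
    unfolding g_def by (rule someI[of _ h]) (rule refl)
  then have "\<forall>i<n. \<forall>j<n. h i = h j \<longleftrightarrow> g i = g j"
    by (subst (asm) eq_commute) (rule kernel_part_eq_iff[THEN iffD1])
  then show ?thesis
    unfolding phi_part_def g_def[symmetric] by (rule exch_system_phit_oprod_cong[OF assms])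
qed

lemma E_indep_phit_oprod_cong:
  assumes exch: "exch_system sA phi sU phit iota"
    and indep: "E_indep phit iota B C"
    and "I \<subseteq> {..<n}" "X ` I \<subseteq> B" "X ` ({..<n} - I) \<subseteq> C"
    and "\<forall>i\<in>I. \<forall>j\<in>I. h i = h j \<longleftrightarrow> g i = g j"
    and "\<forall>i\<in>{..<n} - I. \<forall>j\<in>{..<n} - I. h i = h j \<longleftrightarrow> g i = g j"
  shows "phit (oprod n (\<lambda>j. iota (h j) (X j))) = phit (oprod n (\<lambda>j. iota (g j) (X j)))"
proof -
  have "phi_part phit iota n (kernel_part n h) X = phi_part phit iota n (kernel_part n g) X"
  proof (rule E_indep_def[THEN iffD1, rule_format, OF indep], intro conjI)
    show "I \<union> ({..<n} - I) = {..<n}" "I \<inter> ({..<n} - I) = {}"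
      using assms(3) by auto
    show "\<forall>i\<in>I. X i \<in> B" "\<forall>j\<in>{..<n} - I. X j \<in> C"
      using assms(4,5) by auto
    show "restrict_part (kernel_part n h) I = restrict_part (kernel_part n g) I"
      using assms(3,6) by (rule restrict_part_kernel_part_cong)
    show "restrict_part (kernel_part n h) ({..<n} - I) = restrict_part (kernel_part n g) ({..<n} - I)"
      using assms(7) by (intro restrict_part_kernel_part_cong) auto
  qed (rule partition_on_kernel_part)+
  then show ?thesis
    by (simp add: phit_oprod_eq_phi_part[OF exch])
qed

definition cyclic_shift_on :: "nat set \<Rightarrow> nat \<Rightarrow> (nat \<Rightarrow> nat) \<Rightarrow> nat \<Rightarrow> nat" where
  "cyclic_shift_on I n h j = (if j \<in> I then h j mod n + 1 else h j)"

lemma bij_betw_mod_Suc: "0 < (n::nat) \<Longrightarrow> bij_betw (\<lambda>v. v mod n + 1) {1..n} {1..n}"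
  by (rule bij_betwI[where g = "\<lambda>v. if v = 1 then n else v - 1"]) (auto simp: le_less Suc_le_eq)

lemma bij_betw_PiE_map_on:
  assumes "bij_betw f B B" "I \<subseteq> A"
  shows "bij_betw (\<lambda>h j. if j \<in> I then f (h j) else h j) (A \<rightarrow>\<^sub>E B) (A \<rightarrow>\<^sub>E B)"
proof (rule bij_betwI[where g = "\<lambda>h j. if j \<in> I then inv_into B f (h j) else h j"])
  have "f \<in> B \<rightarrow> B" "inv_into B f \<in> B \<rightarrow> B"
    using assms(1) bij_betw_inv_into by (blast dest: bij_betwE)+
  then show "(\<lambda>h j. if j \<in> I then f (h j) else h j) \<in> (A \<rightarrow>\<^sub>E B) \<rightarrow> (A \<rightarrow>\<^sub>E B)"
    "(\<lambda>h j. if j \<in> I then inv_into B f (h j) else h j) \<in> (A \<rightarrow>\<^sub>E B) \<rightarrow> (A \<rightarrow>\<^sub>E B)"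
    using assms(2) by (auto simp: PiE_def extensional_def Pi_def)
qed (use assms in \<open>auto intro!: ext simp: bij_betw_inv_into_left bij_betw_inv_into_right PiE_def Pi_def\<close>)

lemma bij_betw_cyclic_shift_on:
  assumes "0 < n" "I \<subseteq> {..<n}"
  shows "bij_betw (cyclic_shift_on I n) ({..<n} \<rightarrow>\<^sub>E {1..n}) ({..<n} \<rightarrow>\<^sub>E {1..n})"
  using bij_betw_PiE_map_on[OF bij_betw_mod_Suc[OF assms(1)] assms(2)]
  by (simp add: cyclic_shift_on_def[abs_def])

lemma prod_power_cyclic_shift_on:
  fixes \<omega> :: "'a::comm_monoid_mult"
  assumes "\<omega> ^ n = 1" "I \<subseteq> {..<n}" "h \<in> {..<n} \<rightarrow>\<^sub>E {1..n}"
  shows "(\<Prod>j<n. \<omega> ^ cyclic_shift_on I n h j) = \<omega> ^ card I * (\<Prod>j<n. \<omega> ^ h j)"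
proof -
  have shift: "\<omega> ^ cyclic_shift_on I n h j = (if j \<in> I then \<omega> else 1) * \<omega> ^ h j"
    if "j \<in> {..<n}" for j
  proof -
    have "h j \<in> {1..n}"
      using assms(3) that by blast
    then have "h j mod n + 1 = (if h j = n then 1 else Suc (h j))"
      by auto
    then have "\<omega> ^ (h j mod n + 1) = \<omega> * \<omega> ^ h j"
      using assms(1) by simp
    then show ?thesis
      by (simp add: cyclic_shift_on_def)
  qed
  have "(\<Prod>j<n. \<omega> ^ cyclic_shift_on I n h j) = (\<Prod>j<n. (if j \<in> I then \<omega> else 1) * \<omega> ^ h j)"
    using shift by (rule prod.cong[OF refl])
  also have "\<dots> = (\<Prod>j<n. if j \<in> I then \<omega> else 1) * (\<Prod>j<n. \<omega> ^ h j)"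
    by (rule prod.distrib)
  also have "(\<Prod>j<n. if j \<in> I then \<omega> else 1) = \<omega> ^ card I"
    using assms(2) by (simp add: prod.If_cases Int_absorb1)
  finally show ?thesis .
qed

lemma cyclic_shift_on_same_fibres:
  assumes "0 < n" "I \<subseteq> {..<n}" "h \<in> {..<n} \<rightarrow>\<^sub>E {1..n}"
  shows "\<forall>i\<in>I. \<forall>j\<in>I. cyclic_shift_on I n h i = cyclic_shift_on I n h j \<longleftrightarrow> h i = h j"
    and "\<forall>i\<in>{..<n} - I. \<forall>j\<in>{..<n} - I. cyclic_shift_on I n h i = cyclic_shift_on I n h j \<longleftrightarrow> h i = h j"
proof -
  have inj: "inj_on (\<lambda>v. v mod n + 1) {1..n}"
    using bij_betw_mod_Suc[OF assms(1)] by (rule bij_betw_imp_inj_on)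
  show "\<forall>i\<in>I. \<forall>j\<in>I. cyclic_shift_on I n h i = cyclic_shift_on I n h j \<longleftrightarrow> h i = h j"
  proof (intro ballI)
    fix i j assume "i \<in> I" "j \<in> I"
    then have "h i \<in> {1..n}" "h j \<in> {1..n}"
      using assms(2,3) by blast+
    with inj have "h i mod n + 1 = h j mod n + 1 \<longleftrightarrow> h i = h j"
      by (rule inj_on_eq_iff)
    then show "cyclic_shift_on I n h i = cyclic_shift_on I n h j \<longleftrightarrow> h i = h j"
      using \<open>i \<in> I\<close> \<open>j \<in> I\<close> by (simp add: cyclic_shift_on_def)
  qed
qed (simp add: cyclic_shift_on_def)

theorem proposition2p2:
  fixes sA :: "complex \<Rightarrow> 'a::ring_1 \<Rightarrow> 'a" and phi :: "'a \<Rightarrow> complex"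
    and sU :: "complex \<Rightarrow> 'u::ring_1 \<Rightarrow> 'u" and phit :: "'u \<Rightarrow> complex"
    and iota :: "nat \<Rightarrow> 'a \<Rightarrow> 'u"
    and n :: nat and X :: "nat \<Rightarrow> 'a" and I :: "nat set" and \<omega> :: complex
  assumes "exch_system sA phi sU phit iota"
    and "n \<ge> 1"
    and "I \<subseteq> {..<n}" and "I \<noteq> {}" and "I \<noteq> {..<n}"
    and "E_indep phit iota (gen_alg sA (X ` I)) (gen_alg sA (X ` ({..<n} - I)))"
    and "prim_root n \<omega>"
  shows "cumulant sU phit iota \<omega> n X = 0"
proof -
  have "0 < n" "\<omega> ^ n = 1"
    using assms(2,7) unfolding prim_root_def by auto
  have "0 < card I" "card I < n"
    using assms(3-5) finite_subset[OF assms(3)] psubset_card_mono[of "{..<n}" I] by auto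
  then have \<omega>_I: "\<omega> ^ card I \<noteq> 1"
    using assms(7) unfolding prim_root_def by blast
  define P where "P = {..<n} \<rightarrow>\<^sub>E {1..n}"
  define m where "m h = (\<Prod>j<n. \<omega> ^ h j) * phit (oprod n (\<lambda>j. iota (h j) (X j)))" for h
  have m_shift: "m (cyclic_shift_on I n h) = \<omega> ^ card I * m h" if "h \<in> P" for h
    using that unfolding m_def P_def
    by (simp add: prod_power_cyclic_shift_on[OF \<open>\<omega> ^ n = 1\<close> assms(3)]
        E_indep_phit_oprod_cong[OF assms(1,6,3) _ _ cyclic_shift_on_same_fibres[OF \<open>0 < n\<close> assms(3)]]
        image_subset_iff gen_alg.base)
  have "sum m P = (\<Sum>h\<in>P. m (cyclic_shift_on I n h))"
    using bij_betw_cyclic_shift_on[OF \<open>0 < n\<close> assms(3)] unfolding P_def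
    by (rule sum.reindex_bij_betw[symmetric])
  also have "\<dots> = \<omega> ^ card I * sum m P"
    by (simp add: m_shift sum_distrib_left)
  finally have "(1 - \<omega> ^ card I) * sum m P = 0"
    by (simp add: algebra_simps)
  with \<omega>_I have "sum m P = 0"
    by simp
  then show ?thesis
    using assms(1) unfolding exch_system_def
    by (simp add: cumulant_eq_moment_sum m_def P_def)
qed

end
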